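(* The $\alpha$-expansion algorithm provides no approximation guarantee better than $\frac12$ for the clique inference problem, even for the homogeneous Potts clique potential $C(\mathbf{v})=\lambda\sum_v n_v(\mathbf{v})^2$ with nonnegative vertex potentials: for every $\varepsilon>0$ there is such an instance (with $\lambda=1$) and an assignment $\tilde{\mathbf{v}}$ which is locally optimal with respect to every $\alpha$-expansion move (so that $\alpha$-expansion terminates at $\tilde{\mathbf{v}}$ when started from it) with $F(\tilde{\mathbf{v}})\le(\frac12+\varepsilon)\max_{\mathbf{v}}F(\mathbf{v})$.
   Context: Clique inference problem: there are $n$ vertices $1,\dots,n$, a finite set $V$ of values, real vertex potentials $\psi_{jv}$, and a clique potential $C$ depending only on the counts $n_v(\mathbf{v})=|\{j:v_j=v\}|$; the objective is $F(\mathbf{v})=\sum_{j}\psi_{jv_j}+C(\mathbf{v})$ over $\mathbf{v}\in V^n$. An $\alpha$-expansion move from an assignment $\tilde{\mathbf{v}}$ (for $\alpha\in V$) replaces $\tilde{\mathbf{v}}$ by an assignment maximizing $F$ among all assignments obtained from $\tilde{\mathbf{v}}$ by switching some subset of vertices to the value $\alpha$ (other vertices keep their values). The $\alpha$-expansion algorithm starts from an initial assignment (e.g. all vertices assigned the first value) and repeatedly performs optimal $\alpha$-expansion moves for each $\alpha\in V$ in turn, stopping when in a full round over all values no vertex changes its value. *)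

theory Defs
  imports Complex_Main "HOL-Library.FuncSet"
begin

definition assignments :: "nat \<Rightarrow> nat set \<Rightarrow> (nat \<Rightarrow> nat) set" where
  "assignments n V = PiE {0..<n} (\<lambda>_. V)"

definition value_count :: "nat \<Rightarrow> (nat \<Rightarrow> nat) \<Rightarrow> nat \<Rightarrow> nat" where
  "value_count n a v = card {j \<in> {0..<n}. a j = v}"

definition potts_F :: "nat \<Rightarrow> nat set \<Rightarrow> (nat \<Rightarrow> nat \<Rightarrow> real) \<Rightarrow> real \<Rightarrow> (nat \<Rightarrow> nat) \<Rightarrow> real" where
  "potts_F n V \<psi> lam a =
     (\<Sum>j<n. \<psi> j (a j)) + lam * (\<Sum>v\<in>V. (real (value_count n a v))^2)"

definition expansion_moves :: "nat \<Rightarrow> nat set \<Rightarrow> (nat \<Rightarrow> nat) \<Rightarrow> nat \<Rightarrow> (nat \<Rightarrow> nat) set" where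
  "expansion_moves n V a \<alpha> = {w \<in> assignments n V. \<forall>j<n. w j = a j \<or> w j = \<alpha>}"

definition expansion_locally_optimal ::
  "nat \<Rightarrow> nat set \<Rightarrow> ((nat \<Rightarrow> nat) \<Rightarrow> real) \<Rightarrow> (nat \<Rightarrow> nat) \<Rightarrow> bool" where
  "expansion_locally_optimal n V F a \<longleftrightarrow>
     a \<in> assignments n V \<and> (\<forall>\<alpha>\<in>V. \<forall>w\<in>expansion_moves n V a \<alpha>. F w \<le> F a)"

end

theory Submission
  imports Defs
begin

text \<open>Take values \<open>{0..n}\<close>, let every vertex prefer value \<open>0\<close> mildly (potential 2) and
  vertex \<open>j\<close> prefer its private value \<open>j + 1\<close> strongly (potential \<open>2n\<close>).
  The all-zero assignment scores \<open>2n + n\<^sup>2\<close>, while giving every vertex its private value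
  scores about \<open>2n\<^sup>2\<close>. An \<open>\<alpha>\<close>-expansion from the all-zero assignment can gain the
  strong potential of at most one vertex, and moving \<open>s\<close> vertices to \<open>\<alpha>\<close> costs
  \<open>2s(n - s)\<close> in the clique term, so no such move improves.\<close>

lemma potts_F_cong:
  assumes "\<forall>j<n. w j = a j"
  shows "potts_F n V \<psi> lam w = potts_F n V \<psi> lam a"
proof -
  have "value_count n w v = value_count n a v" for v
    unfolding value_count_def using assms by (metis atLeastLessThan_iff)
  moreover have "(\<Sum>j<n. \<psi> j (w j)) = (\<Sum>j<n. \<psi> j (a j))"
    using assms by (intro sum.cong) auto
  ultimately show ?thesis unfolding potts_F_def by simp
qed

lemma value_count_le: "value_count n w v \<le> n"
proof -
  have "card {j \<in> {0..<n}. w j = v} \<le> card {0..<n}"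
    by (intro card_mono) auto
  then show ?thesis
    by (simp add: value_count_def)
qed

lemma value_count_unused:
  assumes "\<forall>j<n. w j \<noteq> v"
  shows "value_count n w v = 0"
  using assms unfolding value_count_def by auto

lemma value_count_two_valued:
  assumes "\<forall>j<n. w j = \<beta> \<or> w j = \<alpha>" "\<alpha> \<noteq> \<beta>"
  shows "value_count n w \<beta> + value_count n w \<alpha> = n"
proof -
  let ?A = "{j \<in> {0..<n}. w j = \<alpha>}"
  have "value_count n w \<beta> = card ({0..<n} - ?A)"
    unfolding value_count_def using assms by (intro arg_cong[where f = card]) auto
  also have "\<dots> = n - card ?A"
    by (subst card_Diff_subset) auto
  finally show ?thesis
    using value_count_le[of n w \<alpha>] by (simp add: value_count_def)
qed

lemma sum_value_count_sq_two_valued: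
  assumes "\<forall>j<n. w j = \<beta> \<or> w j = \<alpha>" "\<alpha> \<noteq> \<beta>" "\<alpha> \<in> V" "\<beta> \<in> V" "finite V"
  shows "(\<Sum>v\<in>V. (real (value_count n w v))\<^sup>2) =
           (real (value_count n w \<beta>))\<^sup>2 + (real (value_count n w \<alpha>))\<^sup>2"
proof -
  have "(\<Sum>v\<in>V. (real (value_count n w v))\<^sup>2) =
        (\<Sum>v\<in>V. (if v = \<beta> then (real (value_count n w \<beta>))\<^sup>2 else 0)
               + (if v = \<alpha> then (real (value_count n w \<alpha>))\<^sup>2 else 0))"
    using assms(1,2) by (intro sum.cong refl) (auto intro!: value_count_unused)
  also have "\<dots> = (real (value_count n w \<beta>))\<^sup>2 + (real (value_count n w \<alpha>))\<^sup>2"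
    using assms(3-5) by (simp add: sum.distrib)
  finally show ?thesis .
qed

definition spike_potential :: "nat \<Rightarrow> nat \<Rightarrow> nat \<Rightarrow> real" where
  "spike_potential n j v = (if v = 0 then 2 else if v = Suc j then 2 * real n else 0)"

definition zero_assignment :: "nat \<Rightarrow> nat \<Rightarrow> nat" where
  "zero_assignment n j = (if j < n then 0 else undefined)"

definition private_assignment :: "nat \<Rightarrow> nat \<Rightarrow> nat" where
  "private_assignment n j = (if j < n then Suc j else undefined)"

abbreviation spike_F :: "nat \<Rightarrow> (nat \<Rightarrow> nat) \<Rightarrow> real" where
  "spike_F n \<equiv> potts_F n {0..n} (spike_potential n) 1"

lemma zero_assignment_in_assignments: "zero_assignment n \<in> assignments n {0..n}"
  unfolding assignments_def zero_assignment_def by auto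

lemma private_assignment_in_assignments: "private_assignment n \<in> assignments n {0..n}"
  unfolding assignments_def private_assignment_def by auto

lemma spike_F_zero_assignment:
  assumes "0 < n"
  shows "spike_F n (zero_assignment n) = 2 * real n + (real n)\<^sup>2"
proof -
  let ?z = "zero_assignment n"
  have "value_count n ?z 0 = n" "value_count n ?z 1 = 0"
    unfolding value_count_def zero_assignment_def by simp_all
  moreover have "(\<Sum>v\<in>{0..n}. (real (value_count n ?z v))\<^sup>2) =
                 (real (value_count n ?z 0))\<^sup>2 + (real (value_count n ?z 1))\<^sup>2"
    using assms by (intro sum_value_count_sq_two_valued) (auto simp: zero_assignment_def)
  moreover have "(\<Sum>j<n. spike_potential n j (?z j)) = 2 * real n"
    by (simp add: zero_assignment_def spike_potential_def)
  ultimately show ?thesis unfolding potts_F_def by simp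
qed

lemma spike_F_Max_ge: "2 * (real n)\<^sup>2 \<le> Max (spike_F n ` assignments n {0..n})"
proof -
  have "(\<Sum>j<n. spike_potential n j (private_assignment n j)) = 2 * (real n)\<^sup>2"
    by (simp add: private_assignment_def spike_potential_def power2_eq_square)
  then have "2 * (real n)\<^sup>2 \<le> spike_F n (private_assignment n)"
    unfolding potts_F_def by (simp add: sum_nonneg)
  also have "\<dots> \<le> Max (spike_F n ` assignments n {0..n})"
    by (intro Max_ge imageI private_assignment_in_assignments)
       (simp add: assignments_def finite_PiE)
  finally show ?thesis .
qed

lemma spike_potential_sum_two_valued:
  assumes "\<forall>j<n. w j = 0 \<or> w j = \<alpha>" "\<alpha> \<noteq> 0"
  shows "(\<Sum>j<n. spike_potential n j (w j)) \<le>
           2 * real (value_count n w 0) + (if value_count n w \<alpha> = 0 then 0 else 2 * real n)"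
proof -
  define S where "S = {j \<in> {..<n}. w j = \<alpha>}"
  have S_sub: "S \<subseteq> {..<n}" and fin_S: "finite S" unfolding S_def by auto
  have count_\<alpha>: "value_count n w \<alpha> = card S"
    unfolding value_count_def S_def by (simp add: atLeast0LessThan)
  have "value_count n w 0 + card S = n"
    using value_count_two_valued[OF assms(1) assms(2)] count_\<alpha> by simp
  then have count_0: "real (value_count n w 0) = real (card ({..<n} - S))"
    using S_sub by (simp add: card_Diff_subset fin_S)
  have "(\<Sum>j<n. spike_potential n j (w j)) =
        (\<Sum>j\<in>S. spike_potential n j (w j)) + (\<Sum>j\<in>{..<n} - S. spike_potential n j (w j))"
    using S_sub by (simp add: sum.subset_diff[OF S_sub])
  also have "(\<Sum>j\<in>S. spike_potential n j (w j)) = (\<Sum>j\<in>S. spike_potential n j \<alpha>)"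
    by (simp add: S_def)
  also have "(\<Sum>j\<in>{..<n} - S. spike_potential n j (w j)) = (\<Sum>j\<in>{..<n} - S. 2)"
    using assms(1) by (intro sum.cong refl) (auto simp: S_def spike_potential_def)
  also have "(\<Sum>j\<in>S. spike_potential n j \<alpha>) = (\<Sum>j\<in>S. if j = \<alpha> - 1 then 2 * real n else 0)"
    using assms(2) by (intro sum.cong) (auto simp: spike_potential_def)
  also have "\<dots> \<le> (if card S = 0 then 0 else 2 * real n)"
    using fin_S by (auto simp: sum.delta)
  finally show ?thesis using count_0 count_\<alpha> by simp
qed

lemma zero_assignment_locally_optimal:
  assumes "0 < n"
  shows "expansion_locally_optimal n {0..n} (spike_F n) (zero_assignment n)"
  unfolding expansion_locally_optimal_def
proof (intro conjI ballI zero_assignment_in_assignments)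
  fix \<alpha> w
  assume \<alpha>_V: "\<alpha> \<in> {0..n}" and move: "w \<in> expansion_moves n {0..n} (zero_assignment n) \<alpha>"
  have w_vals: "\<forall>j<n. w j = 0 \<or> w j = \<alpha>"
    using move unfolding expansion_moves_def zero_assignment_def by auto
  show "spike_F n w \<le> spike_F n (zero_assignment n)"
  proof (cases "\<alpha> = 0")
    case True
    then show ?thesis
      using w_vals potts_F_cong by (metis zero_assignment_def order_refl)
  next
    case False
    define s where "s = value_count n w \<alpha>"
    have n_split: "value_count n w 0 = n - s" "s \<le> n"
      using value_count_two_valued[OF w_vals False] unfolding s_def by auto
    have "spike_F n w \<le> 2 * real (n - s) + (if s = 0 then 0 else 2 * real n)
                         + ((real (n - s))\<^sup>2 + (real s)\<^sup>2)"
      using spike_potential_sum_two_valued[OF w_vals False]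
        sum_value_count_sq_two_valued[OF w_vals False \<alpha>_V] n_split
      unfolding potts_F_def s_def by simp
    also have "\<dots> \<le> 2 * real n + (real n)\<^sup>2"
    proof (cases "s = 0")
      case False
      have "0 \<le> (real n - real s) * (real s - 1)" using n_split(2) False by simp
      then show ?thesis using False n_split(2) by (simp add: of_nat_diff power2_eq_square algebra_simps)
    qed simp
    finally show ?thesis using spike_F_zero_assignment[OF assms] by simp
  qed
qed

theorem theorem6:
  fixes \<epsilon> :: real
  assumes "\<epsilon> > 0"
  shows "\<exists>(n::nat) (V::nat set) (\<psi>::nat \<Rightarrow> nat \<Rightarrow> real) (a::nat \<Rightarrow> nat).
           0 < n \<and> finite V \<and> V \<noteq> {} \<and>
           (\<forall>j<n. \<forall>v\<in>V. \<psi> j v \<ge> 0) \<and>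
           expansion_locally_optimal n V (potts_F n V \<psi> 1) a \<and>
           potts_F n V \<psi> 1 a \<le> (1/2 + \<epsilon>) * Max (potts_F n V \<psi> 1 ` assignments n V)"
proof -
  define n where "n = nat \<lceil>1/\<epsilon>\<rceil> + 1"
  have n_pos: "0 < n" unfolding n_def by simp
  have "1 / \<epsilon> \<le> real n"
    unfolding n_def by linarith
  then have "1 \<le> \<epsilon> * real n"
    using assms by (simp add: field_simps)
  then have "spike_F n (zero_assignment n) \<le> (1/2 + \<epsilon>) * (2 * (real n)\<^sup>2)"
    using spike_F_zero_assignment[OF n_pos] n_pos by (simp add: power2_eq_square algebra_simps)
  also have "\<dots> \<le> (1/2 + \<epsilon>) * Max (spike_F n ` assignments n {0..n})"
    using spike_F_Max_ge assms by (intro mult_left_mono) auto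
  finally show ?thesis
    using n_pos zero_assignment_locally_optimal[OF n_pos]
    by (intro exI[of _ n] exI[of _ "{0..n}"] exI[of _ "spike_potential n"]
          exI[of _ "zero_assignment n"]) (auto simp: spike_potential_def)
qed

end
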